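(* Let $\Gamma$ be a simple graph on $m$ vertices labeled $1,\dots,m$ and with $n$ edges, and give the edges the NBC labeling. Then every increasing $\Gamma$-forest contains no broken cycle (i.e. is an NBC forest).
   Context: NBC labeling: write each edge as $(i,j)$ with $i<j$; the edges are labeled $1,\dots,n$ so that edges with smaller vertex sum $i+j$ receive larger labels (the edge of smallest sum gets label $n$), and if two edges $(i_1,j_1),(i_2,j_2)$ have the same sum, the one with larger second vertex ($j_1>j_2$) receives the smaller label. A broken cycle is the edge set of a cycle of $\Gamma$ minus its edge of largest label. A tree in $\Gamma$ is increasing if it is rooted at its smallest-labeled vertex and every path from the root to a leaf passes through vertices with increasing labels; a $\Gamma$-forest (a forest subgraph of $\Gamma$) is increasing if each of its trees is increasing. *)

theory Defs
  imports Main
begin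

definition simple_graph :: "nat \<Rightarrow> (nat \<times> nat) set \<Rightarrow> bool" where
  "simple_graph m E \<longleftrightarrow> E \<subseteq> {(i,j). 1 \<le> i \<and> i < j \<and> j \<le> m}"

definition nbc_less :: "nat \<times> nat \<Rightarrow> nat \<times> nat \<Rightarrow> bool" where
  "nbc_less e1 e2 \<longleftrightarrow>
     fst e1 + snd e1 > fst e2 + snd e2 \<or>
     (fst e1 + snd e1 = fst e2 + snd e2 \<and> snd e1 > snd e2)"

definition nbc_label :: "(nat \<times> nat) set \<Rightarrow> nat \<times> nat \<Rightarrow> nat" where
  "nbc_label E e = card {e' \<in> E. nbc_less e' e} + 1"

definition adj :: "(nat \<times> nat) set \<Rightarrow> nat \<Rightarrow> nat \<Rightarrow> bool" where
  "adj F u v \<longleftrightarrow> (u, v) \<in> F \<or> (v, u) \<in> F"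

definition edge_of :: "nat \<Rightarrow> nat \<Rightarrow> nat \<times> nat" where
  "edge_of u v = (min u v, max u v)"

definition is_path :: "(nat \<times> nat) set \<Rightarrow> nat list \<Rightarrow> bool" where
  "is_path F p \<longleftrightarrow> p \<noteq> [] \<and> distinct p \<and>
     (\<forall>i. Suc i < length p \<longrightarrow> adj F (p ! i) (p ! Suc i))"

definition is_cycle :: "(nat \<times> nat) set \<Rightarrow> nat list \<Rightarrow> bool" where
  "is_cycle F vs \<longleftrightarrow> length vs \<ge> 3 \<and> distinct vs \<and>
     (\<forall>i < length vs. adj F (vs ! i) (vs ! ((i + 1) mod length vs)))"

definition cycle_edges :: "nat list \<Rightarrow> (nat \<times> nat) set" where
  "cycle_edges vs = {edge_of (vs ! i) (vs ! ((i + 1) mod length vs)) | i. i < length vs}"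

definition broken_cycle :: "(nat \<times> nat) set \<Rightarrow> (nat \<times> nat) set \<Rightarrow> bool" where
  "broken_cycle E B \<longleftrightarrow> (\<exists>vs e. is_cycle E vs \<and> e \<in> cycle_edges vs \<and>
     (\<forall>e' \<in> cycle_edges vs. nbc_label E e' \<le> nbc_label E e) \<and>
     B = cycle_edges vs - {e})"

definition is_forest :: "(nat \<times> nat) set \<Rightarrow> (nat \<times> nat) set \<Rightarrow> bool" where
  "is_forest E F \<longleftrightarrow> F \<subseteq> E \<and> \<not> (\<exists>vs. is_cycle F vs)"

text \<open>Each tree (connected component of F on {1..m}) is rooted at its smallest
  vertex, and every path starting from the root is increasing.\<close>
definition increasing_forest :: "nat \<Rightarrow> (nat \<times> nat) set \<Rightarrow> (nat \<times> nat) set \<Rightarrow> bool" where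
  "increasing_forest m E F \<longleftrightarrow> is_forest E F \<and>
     (\<forall>r \<in> {1..m}. (\<forall>w. (adj F)\<^sup>*\<^sup>* r w \<longrightarrow> r \<le> w) \<longrightarrow>
        (\<forall>p. is_path F p \<and> hd p = r \<longrightarrow> sorted_wrt (<) p))"

definition nbc_forest :: "(nat \<times> nat) set \<Rightarrow> (nat \<times> nat) set \<Rightarrow> bool" where
  "nbc_forest E F \<longleftrightarrow> \<not> (\<exists>B. broken_cycle E B \<and> B \<subseteq> F)"

end

theory Submission
  imports Defs
begin

text \<open>Suppose the broken cycle \<open>C - {e}\<close> lies in \<open>F\<close>, where \<open>e\<close> has the largest label
  on \<open>C\<close>, i.e. the smallest vertex sum. Rotating \<open>C\<close> gives a path \<open>u_0, ..., u_k\<close> in \<open>F\<close>,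
  closed up by \<open>e = {u_k, u_0}\<close>. Take a path from the root of its tree to the first vertex
  \<open>u_j\<close> where it meets \<open>u_0, ..., u_k\<close>; continuing it along the path in either direction
  gives paths from the root, which are increasing. So \<open>u_0 > ... > u_j < ... < u_k\<close>, and in
  such a valley with \<open>k \<ge> 2\<close> some consecutive pair has a smaller sum than \<open>u_0 + u_k\<close>:
  this edge of \<open>C\<close> has a larger label than \<open>e\<close>.\<close>

lemma adj_commute: "adj F u v \<longleftrightarrow> adj F v u"
  by (auto simp: adj_def)

lemma is_path_iff: "is_path F p \<longleftrightarrow> p \<noteq> [] \<and> distinct p \<and> successively (adj F) p"
  by (simp add: is_path_def successively_conv_nth)

lemma is_path_rev [simp]: "is_path F (rev p) \<longleftrightarrow> is_path F p"
  by (simp add: is_path_iff adj_commute)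

lemma is_path_appendD:
  assumes "is_path F (xs @ ys)"
  shows "xs \<noteq> [] \<Longrightarrow> is_path F xs" and "ys \<noteq> [] \<Longrightarrow> is_path F ys"
  using assms by (auto simp: is_path_iff successively_append_iff)

lemma rtranclp_adj_imp_path:
  "(adj F)\<^sup>*\<^sup>* x y \<Longrightarrow> \<exists>p. is_path F p \<and> hd p = x \<and> last p = y"
proof (induction rule: converse_rtranclp_induct)
  case base
  show ?case by (intro exI[of _ "[y]"]) (simp add: is_path_def)
next
  case (step x z)
  then obtain p where p: "is_path F p" "hd p = z" "last p = y" by blast
  show ?case
  proof (cases "x \<in> set p")
    case True
    define q where "q = dropWhile (\<lambda>v. v \<noteq> x) p"
    have p_split: "p = takeWhile (\<lambda>v. v \<noteq> x) p @ q" by (simp add: q_def)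
    have "q \<noteq> []" using True by (simp add: q_def dropWhile_eq_Nil_conv)
    moreover have "is_path F q" using p(1) p_split \<open>q \<noteq> []\<close> by (metis is_path_appendD(2))
    moreover have "hd q = x" using \<open>q \<noteq> []\<close> hd_dropWhile[of "\<lambda>v. v \<noteq> x" p] by (simp add: q_def)
    moreover have "last q = y" using p(3) p_split \<open>q \<noteq> []\<close> by (metis last_appendR)
    ultimately show ?thesis by blast
  next
    case False
    have "p \<noteq> []" using p(1) by (simp add: is_path_def)
    then have "is_path F (x # p)" "last (x # p) = y"
      using p step.hyps(1) False by (auto simp: is_path_iff successively_Cons)
    then show ?thesis by (metis list.sel(1))
  qed
qed

lemma adj_simple_graph_vertex: "simple_graph m F \<Longrightarrow> adj F u v \<Longrightarrow> u \<in> {1..m}"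
  by (auto simp: simple_graph_def adj_def)

lemma symp_adj: "symp (adj F)"
  by (auto intro: sympI simp: adj_def)

lemma simple_graph_component_root:
  assumes F: "simple_graph m F" and c: "c \<in> {1..m}"
  obtains r where "r \<in> {1..m}" "(adj F)\<^sup>*\<^sup>* r c" "\<forall>w. (adj F)\<^sup>*\<^sup>* r w \<longrightarrow> r \<le> w"
proof -
  define C where "C = {w. (adj F)\<^sup>*\<^sup>* c w}"
  have C_vertices: "C \<subseteq> {1..m}"
  proof
    fix w assume "w \<in> C"
    then have "(adj F)\<^sup>*\<^sup>* c w" by (simp add: C_def)
    then show "w \<in> {1..m}"
      by (induction rule: rtranclp_induct) (use c adj_simple_graph_vertex[OF F] adj_commute in metis)+
  qed
  then have "finite C" by (rule finite_subset) simp
  have "c \<in> C" by (simp add: C_def)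
  define r where "r = Min C"
  have "r \<in> C" unfolding r_def using \<open>finite C\<close> \<open>c \<in> C\<close> by (metis Min_in empty_iff)
  then have "(adj F)\<^sup>*\<^sup>* r c"
    using sympD[OF symp_rtranclp[OF symp_adj]] by (simp add: C_def)
  moreover have "r \<le> w" if "(adj F)\<^sup>*\<^sup>* r w" for w
  proof -
    have "w \<in> C" using \<open>r \<in> C\<close> that by (simp add: C_def)
    then show ?thesis using \<open>finite C\<close> by (simp add: r_def)
  qed
  ultimately show ?thesis using that \<open>r \<in> C\<close> C_vertices by blast
qed

lemma increasing_forest_simple_graph:
  "simple_graph m E \<Longrightarrow> increasing_forest m E F \<Longrightarrow> simple_graph m F"
  by (auto simp: simple_graph_def increasing_forest_def is_forest_def)

lemma increasing_forest_root:
  assumes "simple_graph m E" and "increasing_forest m E F" and "c \<in> {1..m}"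
  obtains r where "(adj F)\<^sup>*\<^sup>* r c" and "\<forall>p. is_path F p \<and> hd p = r \<longrightarrow> sorted_wrt (<) p"
proof -
  have "simple_graph m F" using assms(1,2) by (rule increasing_forest_simple_graph)
  then obtain r where "r \<in> {1..m}" "(adj F)\<^sup>*\<^sup>* r c" "\<forall>w. (adj F)\<^sup>*\<^sup>* r w \<longrightarrow> r \<le> w"
    using assms(3) by (rule simple_graph_component_root)
  with assms(2) that show ?thesis by (auto simp: increasing_forest_def)
qed

lemma path_valley:
  assumes U: "is_path F U" and reach: "(adj F)\<^sup>*\<^sup>* r (hd U)"
    and root_sorted: "\<forall>p. is_path F p \<and> hd p = r \<longrightarrow> sorted_wrt (<) p"
  obtains j where "j < length U" "sorted_wrt (>) (take (Suc j) U)" "sorted_wrt (<) (drop j U)"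
proof -
  obtain p where p: "is_path F p" "hd p = r" "last p = hd U"
    using rtranclp_adj_imp_path[OF reach] by blast
  define Q where "Q = takeWhile (\<lambda>v. v \<notin> set U) p"
  define D where "D = dropWhile (\<lambda>v. v \<notin> set U) p"
  have p_split: "p = Q @ D" by (simp add: Q_def D_def)
  have "U \<noteq> []" "p \<noteq> []" using U p(1) by (simp_all add: is_path_def)
  then have "last p \<in> set U" using p(3) by simp
  then have "D \<noteq> []" unfolding D_def dropWhile_eq_Nil_conv using \<open>p \<noteq> []\<close> by auto
  have Q_U: "set Q \<inter> set U = {}" by (auto simp: Q_def dest: set_takeWhileD)
  have "hd D \<in> set U" using hd_dropWhile[of "\<lambda>v. v \<notin> set U" p] \<open>D \<noteq> []\<close> unfolding D_def by blast
  have sorted_from_junction: "sorted_wrt (<) R"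
    if R: "is_path F R" "hd R = hd D" "set R \<subseteq> set U" for R
  proof -
    have "distinct (Q @ D)" "successively (adj F) (Q @ D)"
      using p(1) unfolding p_split is_path_iff by simp_all
    then have "is_path F (Q @ R)"
      using R Q_U \<open>D \<noteq> []\<close> unfolding is_path_iff by (auto simp: successively_append_iff)
    moreover have "hd (Q @ R) = r"
      using p(2) R(2) unfolding p_split by (simp add: hd_append split: if_split_asm)
    ultimately have "sorted_wrt (<) (Q @ R)" using root_sorted by blast
    then show ?thesis by (simp add: sorted_wrt_append)
  qed
  obtain j where j: "j < length U" "U ! j = hd D"
    using \<open>hd D \<in> set U\<close> by (metis in_set_conv_nth)
  have "is_path F (drop j U)"
    using U j(1) is_path_appendD(2)[of F "take j U" "drop j U"] by simp
  then have rising: "sorted_wrt (<) (drop j U)"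
    using j by (intro sorted_from_junction) (simp_all add: hd_drop_conv_nth set_drop_subset)
  have "is_path F (rev (take (Suc j) U))"
    using U \<open>U \<noteq> []\<close> is_path_appendD(1)[of F "take (Suc j) U" "drop (Suc j) U"] by simp
  then have "sorted_wrt (<) (rev (take (Suc j) U))"
    using j \<open>hd D \<in> set U\<close>
    by (intro sorted_from_junction) (simp_all add: take_Suc_conv_app_nth set_take_subset)
  then show ?thesis using that j(1) rising by (simp add: sorted_wrt_rev)
qed

lemma increasing_forest_path_valley:
  assumes "simple_graph m E" and "increasing_forest m E F" and U: "is_path F U" "length U \<ge> 2"
  obtains j where "j < length U" "sorted_wrt (>) (take (Suc j) U)" "sorted_wrt (<) (drop j U)"
proof -
  have "adj F (hd U) (U ! 1)"
    using U by (auto simp: is_path_def hd_conv_nth)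
  then have "hd U \<in> {1..m}"
    using increasing_forest_simple_graph[OF assms(1,2)] by (rule adj_simple_graph_vertex[rotated])
  then obtain r where "(adj F)\<^sup>*\<^sup>* r (hd U)" "\<forall>p. is_path F p \<and> hd p = r \<longrightarrow> sorted_wrt (<) p"
    by (rule increasing_forest_root[OF assms(1,2)])
  with U(1) that show ?thesis by (elim path_valley)
qed

lemma valley_consecutive_sum_less:
  fixes U :: "'a :: {linorder, ordered_cancel_ab_semigroup_add} list"
  assumes "length U \<ge> 3" and "j < length U"
    and dec: "sorted_wrt (>) (take (Suc j) U)" and inc: "sorted_wrt (<) (drop j U)"
  shows "\<exists>t. Suc t < length U \<and> U ! t + U ! Suc t < hd U + last U"
proof -
  define n where "n = length U - 1"
  have "U \<noteq> []" using assms(1) by auto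
  then have U_ends: "hd U = U ! 0" "last U = U ! n"
    by (simp_all add: n_def hd_conv_nth last_conv_nth)
  have dec_nth: "U ! b < U ! a" if "a < b" "b \<le> j" for a b
    using dec that assms(2) by (auto simp: sorted_wrt_iff_nth_less)
  have inc_nth: "U ! a < U ! b" if "j \<le> a" "a < b" "b \<le> n" for a b
  proof -
    have "\<forall>i k. i < k \<longrightarrow> k < length U - j \<longrightarrow> U ! (j + i) < U ! (j + k)"
      using inc by (simp add: sorted_wrt_iff_nth_less)
    moreover have "a - j < b - j" "b - j < length U - j" using that by (auto simp: n_def)
    ultimately have "U ! (j + (a - j)) < U ! (j + (b - j))" by blast
    then show ?thesis using that by simp
  qed
  show ?thesis
  proof (cases j)
    case 0
    then have "U ! 1 < U ! n"
      using inc_nth[of 1 n] assms(1) by (simp add: n_def)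
    then have "U ! 0 + U ! 1 < U ! 0 + U ! n"
      by (rule add_strict_left_mono)
    then show ?thesis using assms(1) U_ends by (intro exI[of _ 0]) simp
  next
    case (Suc t)
    have "U ! t + U ! Suc t < U ! 0 + U ! n"
    proof (cases "t = 0")
      case True
      then have "U ! Suc t < U ! n" using inc_nth[of j n] Suc assms(1) by (simp add: n_def)
      then show ?thesis using True by (simp add: add_strict_left_mono)
    next
      case False
      then have "U ! t < U ! 0" using dec_nth[of 0 t] Suc by simp
      moreover have "U ! Suc t \<le> U ! n"
        using inc_nth[of j n] Suc assms(2) by (cases "j = n") (auto simp: n_def less_imp_le)
      ultimately show ?thesis by (rule add_less_le_mono)
    qed
    then show ?thesis using Suc assms(2) U_ends by (intro exI[of _ t]) simp
  qed
qed

lemma edge_of_eq_iff: "edge_of a b = edge_of c d \<longleftrightarrow> (a = c \<and> b = d) \<or> (a = d \<and> b = c)"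
  by (auto simp: edge_of_def min_def max_def)

lemma adj_if_edge_of: "edge_of u v \<in> F \<Longrightarrow> adj F u v"
  by (auto simp: edge_of_def adj_def min_def split: if_splits)

lemma edge_of_if_adj: "simple_graph m E \<Longrightarrow> adj E u v \<Longrightarrow> edge_of u v \<in> E"
  by (auto simp: simple_graph_def edge_of_def adj_def min_def max_def)

lemma simple_graph_finite: "simple_graph m E \<Longrightarrow> finite E"
  unfolding simple_graph_def by (rule finite_subset[of _ "{1..m} \<times> {1..m}"]) auto

lemma cycle_edges_subset: "simple_graph m E \<Longrightarrow> is_cycle E vs \<Longrightarrow> cycle_edges vs \<subseteq> E"
  using edge_of_if_adj[of m E] by (auto simp: cycle_edges_def is_cycle_def)

lemma consecutive_edge_in_cycle_edges:
  "Suc t < length vs \<Longrightarrow> edge_of (vs ! t) (vs ! Suc t) \<in> cycle_edges vs"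
  unfolding cycle_edges_def by (rule CollectI, rule exI[of _ t]) simp

lemma cycle_edges_rotate_subset: "cycle_edges (rotate k vs) \<subseteq> cycle_edges vs"
proof
  fix x assume "x \<in> cycle_edges (rotate k vs)"
  then obtain i where i: "i < length vs"
    and x: "x = edge_of (rotate k vs ! i) (rotate k vs ! ((i + 1) mod length vs))"
    by (auto simp: cycle_edges_def)
  define j where "j = (k + i) mod length vs"
  have "0 < length vs" using i by arith
  then have "j < length vs" "(i + 1) mod length vs < length vs" by (simp_all add: j_def)
  moreover have "(k + (i + 1) mod length vs) mod length vs = (j + 1) mod length vs"
    by (simp add: j_def mod_add_right_eq mod_Suc_eq)
  ultimately have "x = edge_of (vs ! j) (vs ! ((j + 1) mod length vs))"
    using i by (simp add: x j_def nth_rotate)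
  then show "x \<in> cycle_edges vs"
    unfolding cycle_edges_def using \<open>j < length vs\<close> by blast
qed

lemma cycle_edge_closes_rotation:
  assumes "e \<in> cycle_edges vs"
  obtains k where "e = edge_of (last (rotate k vs)) (hd (rotate k vs))"
proof -
  obtain i where i: "i < length vs" and e: "e = edge_of (vs ! i) (vs ! ((i + 1) mod length vs))"
    using assms by (auto simp: cycle_edges_def)
  have "0 < length vs" using i by arith
  have "rotate (Suc i) vs ! (length vs - 1) = vs ! ((Suc i + (length vs - 1)) mod length vs)"
    using \<open>0 < length vs\<close> by (intro nth_rotate) simp
  also have "Suc i + (length vs - 1) = length vs + i" using i by simp
  also have "(length vs + i) mod length vs = i" using i by simp
  finally have "last (rotate (Suc i) vs) = vs ! i"
    using \<open>0 < length vs\<close> by (simp add: last_conv_nth del: rotate_Suc)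
  moreover have "hd (rotate (Suc i) vs) = vs ! ((i + 1) mod length vs)"
    using \<open>0 < length vs\<close> nth_rotate[of 0 vs "Suc i"] by (simp add: hd_conv_nth del: rotate_Suc)
  ultimately show ?thesis using e by (intro that[of "Suc i"]) simp
qed

lemma broken_cycle_path:
  assumes cycle: "is_cycle E vs" and e: "e \<in> cycle_edges vs"
    and broken: "cycle_edges vs - {e} \<subseteq> F"
  obtains U where "is_path F U" "length U \<ge> 3" "e = edge_of (last U) (hd U)"
    "\<forall>t. Suc t < length U \<longrightarrow> edge_of (U ! t) (U ! Suc t) \<in> cycle_edges vs"
proof -
  obtain k where closing: "e = edge_of (last (rotate k vs)) (hd (rotate k vs))"
    using e by (rule cycle_edge_closes_rotation)
  define U where "U = rotate k vs"
  have U: "distinct U" "length U \<ge> 3" using cycle by (simp_all add: U_def is_cycle_def)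
  then have "U \<noteq> []" by auto
  then have U_ends: "last U = U ! (length U - 1)" "hd U = U ! 0"
    by (simp_all add: last_conv_nth hd_conv_nth)
  have U_edges: "edge_of (U ! t) (U ! Suc t) \<in> cycle_edges vs" if "Suc t < length U" for t
    using consecutive_edge_in_cycle_edges[OF that] cycle_edges_rotate_subset by (auto simp: U_def)
  have "edge_of (U ! t) (U ! Suc t) \<noteq> e" if "Suc t < length U" for t
  proof
    assume "edge_of (U ! t) (U ! Suc t) = e"
    then have "(U ! t = U ! (length U - 1) \<and> U ! Suc t = U ! 0)
        \<or> (U ! t = U ! 0 \<and> U ! Suc t = U ! (length U - 1))"
      by (simp add: closing U_def[symmetric] U_ends edge_of_eq_iff)
    then consider "U ! t = U ! (length U - 1)" | "U ! t = U ! 0" "U ! Suc t = U ! (length U - 1)"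
      by blast
    then show False
    proof cases
      case 1
      then have "t = length U - 1" using U(1) that by (simp add: nth_eq_iff_index_eq)
      then show False using that by simp
    next
      case 2
      then have "t = 0" "Suc t = length U - 1"
        using nth_eq_iff_index_eq[OF U(1), of t 0] nth_eq_iff_index_eq[OF U(1), of "Suc t" "length U - 1"]
          that \<open>U \<noteq> []\<close> by auto
      then show False using U(2) by simp
    qed
  qed
  then have "adj F (U ! t) (U ! Suc t)" if "Suc t < length U" for t
    using U_edges[OF that] that broken by (blast intro: adj_if_edge_of)
  then have "is_path F U" using U by (auto simp: is_path_def)
  then show ?thesis using that U U_edges closing by (simp add: U_def)
qed

lemma nbc_less_edge_of: "u + v < x + y \<Longrightarrow> nbc_less (edge_of x y) (edge_of u v)"
  by (auto simp: nbc_less_def edge_of_def min_def max_def)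

lemma nbc_label_strict_mono:
  assumes "finite E" and "e \<in> E" and "nbc_less e f"
  shows "nbc_label E e < nbc_label E f"
proof -
  have "{e' \<in> E. nbc_less e' e} \<subset> {e' \<in> E. nbc_less e' f}"
    using assms(2,3) by (auto simp: nbc_less_def)
  then show ?thesis
    unfolding nbc_label_def using assms(1) by (simp add: psubset_card_mono)
qed

theorem lemma8p3:
  fixes m n :: nat and E F :: "(nat \<times> nat) set"
  assumes "simple_graph m E" and "card E = n"
    and "increasing_forest m E F"
  shows "nbc_forest E F"
  unfolding nbc_forest_def
proof
  assume "\<exists>B. broken_cycle E B \<and> B \<subseteq> F"
  then obtain vs e where cycle: "is_cycle E vs" and e: "e \<in> cycle_edges vs"
    and e_max: "\<forall>e' \<in> cycle_edges vs. nbc_label E e' \<le> nbc_label E e"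
    and broken: "cycle_edges vs - {e} \<subseteq> F"
    unfolding broken_cycle_def by blast
  obtain U where U: "is_path F U" "length U \<ge> 3" "e = edge_of (last U) (hd U)"
    and U_edges: "\<forall>t. Suc t < length U \<longrightarrow> edge_of (U ! t) (U ! Suc t) \<in> cycle_edges vs"
    using cycle e broken by (rule broken_cycle_path)
  obtain j where j: "j < length U" "sorted_wrt (>) (take (Suc j) U)" "sorted_wrt (<) (drop j U)"
    using assms(1,3) U(1,2) by (elim increasing_forest_path_valley) auto
  obtain t where t: "Suc t < length U" "U ! t + U ! Suc t < hd U + last U"
    using valley_consecutive_sum_less[OF U(2) j] by blast
  define f where "f = edge_of (U ! t) (U ! Suc t)"
  have "f \<in> cycle_edges vs" using U_edges t(1) by (simp add: f_def)
  moreover have "nbc_label E e < nbc_label E f"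
  proof (rule nbc_label_strict_mono)
    show "finite E" using assms(1) by (rule simple_graph_finite)
    show "e \<in> E" using cycle_edges_subset[OF assms(1) cycle] e by blast
    show "nbc_less e f" unfolding f_def U(3) using t(2) by (intro nbc_less_edge_of) linarith
  qed
  ultimately show False using e_max by fastforce
qed

end
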